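(* Assume the local Lipschitz condition (2.2) and let $h$ be as in (2.3). Let $\Delta\in(0,\Delta^*]$ be small enough that $|f(0)|\le h(\Delta)$, $|g(0)|\le h(\Delta)$ and $L_{h(\Delta)}\ge 1$. Then the modified truncated functions $f_\Delta$ and $g_\Delta$ are globally Lipschitz with constant $4L_{h(\Delta)}$: $$|f_\Delta(x)-f_\Delta(\bar x)|\vee|g_\Delta(x)-g_\Delta(\bar x)|\le 4L_{h(\Delta)}|x-\bar x|\qquad\text{for all }x,\bar x\in\mathbb{R}^d.$$
   Context: $f:\mathbb{R}^d\to\mathbb{R}^d$ and $g:\mathbb{R}^d\to\mathbb{R}^{d\times m}$ are measurable. $|\cdot|$ denotes the Euclidean norm of vectors and the trace norm $|A|=\sqrt{\mathrm{trace}(A^TA)}$ of matrices. Condition (2.2) (local Lipschitz): for every $R>0$ there is $L_R>0$ such that $|f(x)-f(\bar x)|\vee|g(x)-g(\bar x)|\le L_R|x-\bar x|$ whenever $|x|\vee|\bar x|\le R$; $L_R$ is nondecreasing in $R$ and $L_R\uparrow\infty$ as $R\to\infty$. Condition (2.3): $\Delta^*>0$ and $h:(0,\Delta^*]\to(0,\infty)$ is strictly positive and decreasing with $\lim_{\Delta\to0}h(\Delta)=\infty$ and $\lim_{\Delta\to0}L_{h(\Delta)}^4\Delta=0$. Modified truncated functions: for $\Delta\in(0,\Delta^*]$, $f_\Delta(x)=f(x)$ if $|x|\le h(\Delta)$ and $f_\Delta(x)=\frac{|x|}{h(\Delta)}\,f\!\left(h(\Delta)\frac{x}{|x|}\right)$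 if $|x|>h(\Delta)$; $g_\Delta$ is defined in the same way from $g$. *)

theory Defs
  imports "HOL-Analysis.Analysis"
begin

definition mtrunc :: "real \<Rightarrow> ('a::real_normed_vector \<Rightarrow> 'b::real_normed_vector) \<Rightarrow> 'a \<Rightarrow> 'b" where
  "mtrunc H F x = (if norm x \<le> H then F x else (norm x / H) *\<^sub>R F ((H / norm x) *\<^sub>R x))"

end

theory Submission
  imports Defs
begin

text \<open>Write \<open>F\<^sub>H(z) = s(z) F(P z)\<close>, where \<open>P\<close> is the radial retraction onto the ball of
  radius \<open>H\<close> and \<open>s(z) = max |z| H / H \<ge> 1\<close>. Then
  \<open>F\<^sub>H(x) - F\<^sub>H(y) = s(y) (F(P x) - F(P y)) + (s(x) - s(y)) F(P x)\<close>.
  For \<open>|y| \<le> |x|\<close> one has \<open>s(y) |P x - P y| \<le> 2|x - y|\<close>, so the first term is at most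
  \<open>2K|x - y|\<close>; and \<open>s\<close> is \<open>1/H\<close>-Lipschitz while \<open>|F(P x)| \<le> KH + |F 0| \<le> 2KH\<close>,
  so the second term is at most \<open>2K|x - y|\<close> as well.\<close>

definition ball_retract :: "real \<Rightarrow> 'a::real_normed_vector \<Rightarrow> 'a" where
  "ball_retract H z = (if norm z \<le> H then z else (H / norm z) *\<^sub>R z)"

definition trunc_scale :: "real \<Rightarrow> 'a::real_normed_vector \<Rightarrow> real" where
  "trunc_scale H z = max (norm z) H / H"

lemma mtrunc_eq_scale_retract:
  assumes "H > 0"
  shows "mtrunc H F z = trunc_scale H z *\<^sub>R F (ball_retract H z)"
  using assms by (auto simp: mtrunc_def ball_retract_def trunc_scale_def max_def)

lemma norm_ball_retract_le:
  assumes "H > 0"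
  shows "norm (ball_retract H z) \<le> H"
  using assms by (auto simp: ball_retract_def)

lemma trunc_scale_ge_1:
  assumes "H > 0"
  shows "trunc_scale H z \<ge> 1"
  using assms by (simp add: trunc_scale_def)

lemma trunc_scale_diff_le:
  assumes "H > 0"
  shows "\<bar>trunc_scale H x - trunc_scale H y\<bar> \<le> norm (x - y) / H"
proof -
  have "\<bar>trunc_scale H x - trunc_scale H y\<bar> = \<bar>max (norm x) H - max (norm y) H\<bar> / H"
    using assms by (simp add: trunc_scale_def diff_divide_distrib[symmetric])
  also have "\<dots> \<le> norm (x - y) / H"
    using norm_triangle_ineq3[of x y] assms by (intro divide_right_mono) (auto simp: max_def)
  finally show ?thesis .
qed

lemma norm_rescale_diff:
  fixes x :: "'a::real_normed_vector"
  assumes "0 \<le> t" "t \<le> norm x" "x \<noteq> 0"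
  shows "norm ((t / norm x) *\<^sub>R x - x) = norm x - t"
proof -
  have "(t / norm x) *\<^sub>R x - x = (t / norm x - 1) *\<^sub>R x"
    by (simp add: algebra_simps)
  moreover have "\<bar>t / norm x - 1\<bar> = 1 - t / norm x"
    using assms by (simp add: divide_le_eq_1)
  ultimately show ?thesis
    using assms by (simp add: field_simps)
qed

lemma trunc_scale_mult_retract_diff_le:
  fixes x y :: "'a::real_normed_vector"
  assumes H: "H > 0" and yx: "norm y \<le> norm x"
  shows "trunc_scale H y * norm (ball_retract H x - ball_retract H y) \<le> 2 * norm (x - y)"
proof (cases "norm x \<le> H")
  case True
  then show ?thesis
    using yx H by (simp add: ball_retract_def trunc_scale_def max_def)
next
  case x_out: False
  then have "x \<noteq> 0"
    using H by auto
  show ?thesis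
  proof (cases "norm y \<le> H")
    case True
    have "norm (ball_retract H x - ball_retract H y)
        = norm (((H / norm x) *\<^sub>R x - x) + (x - y))"
      using x_out True by (simp add: ball_retract_def)
    also have "\<dots> \<le> (norm x - H) + norm (x - y)"
      using norm_rescale_diff[of H x] norm_triangle_ineq[of "(H / norm x) *\<^sub>R x - x" "x - y"]
        x_out H \<open>x \<noteq> 0\<close> by linarith
    also have "\<dots> \<le> 2 * norm (x - y)"
      using True norm_triangle_ineq2[of x y] by simp
    finally show ?thesis
      using True H by (simp add: trunc_scale_def max_def)
  next
    case y_out: False
    \<comment> \<open>outside the ball \<open>s(y) P y = y\<close>\<close>
    have "trunc_scale H y *\<^sub>R (ball_retract H x - ball_retract H y) = (norm y / norm x) *\<^sub>R x - y"
      using x_out y_out H by (simp add: ball_retract_def trunc_scale_def max_def algebra_simps)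
    then have "trunc_scale H y * norm (ball_retract H x - ball_retract H y)
        = norm ((norm y / norm x) *\<^sub>R x - y)"
      using trunc_scale_ge_1[OF H, of y] by (metis abs_of_nonneg norm_scaleR order_trans zero_le_one)
    also have "\<dots> = norm (((norm y / norm x) *\<^sub>R x - x) + (x - y))"
      by simp
    also have "\<dots> \<le> (norm x - norm y) + norm (x - y)"
      using norm_rescale_diff[of "norm y" x] yx \<open>x \<noteq> 0\<close> norm_ge_zero[of y]
        norm_triangle_ineq[of "(norm y / norm x) *\<^sub>R x - x" "x - y"] by linarith
    also have "\<dots> \<le> 2 * norm (x - y)"
      using norm_triangle_ineq2[of x y] by simp
    finally show ?thesis .
  qed
qed

lemma norm_le_on_ball_of_lipschitz:
  fixes F :: "'a::real_normed_vector \<Rightarrow> 'b::real_normed_vector"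
  assumes K: "K \<ge> 1"
    and lip: "\<And>u v. norm u \<le> H \<Longrightarrow> norm v \<le> H \<Longrightarrow> norm (F u - F v) \<le> K * norm (u - v)"
    and F0: "norm (F 0) \<le> H"
    and u: "norm u \<le> H"
  shows "norm (F u) \<le> 2 * K * H"
proof -
  have "0 \<le> H"
    using norm_ge_zero[of u] u by linarith
  have "norm (F u) \<le> norm (F u - F 0) + norm (F 0)"
    using norm_triangle_ineq[of "F u - F 0" "F 0"] by simp
  also have "\<dots> \<le> K * norm u + H"
    using lip[OF u, of 0] \<open>0 \<le> H\<close> F0 by (intro add_mono) auto
  also have "\<dots> \<le> K * H + K * H"
    using mult_left_mono[OF u, of K] mult_right_mono[OF K \<open>0 \<le> H\<close>] K by linarith
  finally show ?thesis
    by (simp add: algebra_simps)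
qed

lemma mtrunc_lipschitz_ordered:
  fixes F :: "'a::real_normed_vector \<Rightarrow> 'b::real_normed_vector"
  assumes H: "H > 0" and K: "K \<ge> 1"
    and lip: "\<And>u v. norm u \<le> H \<Longrightarrow> norm v \<le> H \<Longrightarrow> norm (F u - F v) \<le> K * norm (u - v)"
    and F0: "norm (F 0) \<le> H"
    and yx: "norm y \<le> norm x"
  shows "norm (mtrunc H F x - mtrunc H F y) \<le> 4 * K * norm (x - y)"
proof -
  let ?s = "trunc_scale H" and ?P = "ball_retract H"
  have P_in: "norm (?P z) \<le> H" for z :: 'a
    using norm_ball_retract_le[OF H] .
  have "mtrunc H F x - mtrunc H F y = ?s y *\<^sub>R (F (?P x) - F (?P y)) + (?s x - ?s y) *\<^sub>R F (?P x)"
    using H by (simp add: mtrunc_eq_scale_retract algebra_simps)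
  then have "norm (mtrunc H F x - mtrunc H F y)
      \<le> norm (?s y *\<^sub>R (F (?P x) - F (?P y))) + norm ((?s x - ?s y) *\<^sub>R F (?P x))"
    by (simp only: norm_triangle_ineq)
  moreover have "norm (?s y *\<^sub>R (F (?P x) - F (?P y))) \<le> 2 * K * norm (x - y)"
  proof -
    have "norm (?s y *\<^sub>R (F (?P x) - F (?P y))) = ?s y * norm (F (?P x) - F (?P y))"
      using trunc_scale_ge_1[OF H, of y] by simp
    also have "\<dots> \<le> ?s y * (K * norm (?P x - ?P y))"
      using lip[OF P_in P_in] trunc_scale_ge_1[OF H, of y] by (intro mult_left_mono) auto
    also have "\<dots> = K * (?s y * norm (?P x - ?P y))"
      by simp
    also have "\<dots> \<le> K * (2 * norm (x - y))"
      using trunc_scale_mult_retract_diff_le[OF H yx] K by (intro mult_left_mono) auto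
    finally show ?thesis
      by simp
  qed
  moreover have "norm ((?s x - ?s y) *\<^sub>R F (?P x)) \<le> 2 * K * norm (x - y)"
  proof -
    have "norm ((?s x - ?s y) *\<^sub>R F (?P x)) = \<bar>?s x - ?s y\<bar> * norm (F (?P x))"
      by simp
    also have "\<dots> \<le> (norm (x - y) / H) * (2 * K * H)"
      using trunc_scale_diff_le[OF H] norm_le_on_ball_of_lipschitz[OF K lip F0 P_in] H
      by (intro mult_mono) auto
    also have "\<dots> = 2 * K * norm (x - y)"
      using H by simp
    finally show ?thesis .
  qed
  ultimately show ?thesis
    by linarith
qed

lemma mtrunc_lipschitz:
  fixes F :: "'a::real_normed_vector \<Rightarrow> 'b::real_normed_vector"
  assumes H: "H > 0" and K: "K \<ge> 1"
    and lip: "\<And>u v. norm u \<le> H \<Longrightarrow> norm v \<le> H \<Longrightarrow> norm (F u - F v) \<le> K * norm (u - v)"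
    and F0: "norm (F 0) \<le> H"
  shows "norm (mtrunc H F x - mtrunc H F y) \<le> 4 * K * norm (x - y)"
proof (cases "norm y \<le> norm x")
  case True
  then show ?thesis
    using mtrunc_lipschitz_ordered[OF assms] by blast
next
  case False
  then show ?thesis
    using mtrunc_lipschitz_ordered[OF assms, of x y] by (simp add: norm_minus_commute)
qed

theorem lemma2p2:
  fixes f :: "real^'d \<Rightarrow> real^'d"
    and g :: "real^'d \<Rightarrow> real^'m^'d"
    and L :: "real \<Rightarrow> real"
    and h :: "real \<Rightarrow> real"
    and \<Delta>star \<Delta> :: real
  assumes f_meas: "f \<in> borel_measurable borel"
    and g_meas: "g \<in> borel_measurable borel"
    and L_pos: "\<And>R. R > 0 \<Longrightarrow> L R > 0"
    and loc_lip: "\<And>R x xb. R > 0 \<Longrightarrow> max (norm x) (norm xb) \<le> R \<Longrightarrow>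
        max (norm (f x - f xb)) (norm (g x - g xb)) \<le> L R * norm (x - xb)"
    and L_mono: "\<And>R R'. 0 < R \<Longrightarrow> R \<le> R' \<Longrightarrow> L R \<le> L R'"
    and L_inf: "filterlim L at_top at_top"
    and Dstar_pos: "\<Delta>star > 0"
    and h_pos: "\<And>D. 0 < D \<Longrightarrow> D \<le> \<Delta>star \<Longrightarrow> h D > 0"
    and h_decr: "\<And>D D'. 0 < D \<Longrightarrow> D \<le> D' \<Longrightarrow> D' \<le> \<Delta>star \<Longrightarrow> h D' \<le> h D"
    and h_lim: "filterlim h at_top (at_right 0)"
    and hL_lim: "((\<lambda>D. (L (h D))^4 * D) \<longlongrightarrow> 0) (at_right 0)"
    and D_range: "0 < \<Delta>" "\<Delta> \<le> \<Delta>star"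
    and f0: "norm (f 0) \<le> h \<Delta>"
    and g0: "norm (g 0) \<le> h \<Delta>"
    and L1: "L (h \<Delta>) \<ge> 1"
  shows "\<forall>x xb. max (norm (mtrunc (h \<Delta>) f x - mtrunc (h \<Delta>) f xb))
                    (norm (mtrunc (h \<Delta>) g x - mtrunc (h \<Delta>) g xb))
                 \<le> 4 * L (h \<Delta>) * norm (x - xb)"
proof (intro allI)
  fix x xb :: "real^'d"
  have H: "h \<Delta> > 0"
    using h_pos D_range by simp
  have lip_f: "norm (f u - f v) \<le> L (h \<Delta>) * norm (u - v)"
    and lip_g: "norm (g u - g v) \<le> L (h \<Delta>) * norm (u - v)"
    if "norm u \<le> h \<Delta>" "norm v \<le> h \<Delta>" for u v
    using loc_lip[OF H, of u v] that by simp_all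
  show "max (norm (mtrunc (h \<Delta>) f x - mtrunc (h \<Delta>) f xb))
            (norm (mtrunc (h \<Delta>) g x - mtrunc (h \<Delta>) g xb))
        \<le> 4 * L (h \<Delta>) * norm (x - xb)"
    using mtrunc_lipschitz[OF H L1 lip_f f0] mtrunc_lipschitz[OF H L1 lip_g g0] by simp
qed

end
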